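(* Let $\lambda>0$ and $\theta\in(0,\pi/2)$. For each $m>0$ set $n=m\tan\theta$, $X=(\lambda,0)$, $Y=(0,0)$, $Z=(m,n)$, and let $\varphi_m(\alpha,\beta)=\frac12(\alpha^2+2b\alpha\beta+a\beta^2)+c\alpha+d\beta$ be the conic satisfying (P1) $\varphi_m(X)=\varphi_m(Y)=\varphi_m(Z)=0$ and (P2) $Y-X$ is a positive multiple of $-\nabla\varphi_m(X)$ and $Z-Y$ is a positive multiple of $-\nabla\varphi_m(Y)$. Call $\{\varphi_m=0\}$ admissible if it is an ellipse. Then the set of centers $(u,v)$ of all admissible ellipses is contained in the line $u=\frac{\lambda}{2}-\frac{\tan\theta}{2}\,v$.
   Context: The center of an ellipse $\{\varphi=0\}$ is the point where $\nabla\varphi=0$. *)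

theory Defs
  imports "HOL-Analysis.Analysis"
begin

definition conic :: "real \<Rightarrow> real \<Rightarrow> real \<Rightarrow> real \<Rightarrow> real \<times> real \<Rightarrow> real" where
  "conic a b c d p = (let (x, y) = p in (x^2 + 2*b*x*y + a*y^2) / 2 + c*x + d*y)"

definition conic_grad :: "real \<Rightarrow> real \<Rightarrow> real \<Rightarrow> real \<Rightarrow> real \<times> real \<Rightarrow> real \<times> real" where
  "conic_grad a b c d p = (let (x, y) = p in (x + b*y + c, b*x + a*y + d))"

definition is_ellipse :: "(real \<times> real) set \<Rightarrow> bool" where
  "is_ellipse S \<longleftrightarrow> (\<exists>x0 y0 A B C. A > 0 \<and> A*C - B^2 > 0 \<and>
      S = {(x, y). A*(x-x0)^2 + 2*B*(x-x0)*(y-y0) + C*(y-y0)^2 = 1})"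

definition conic_conditions :: "real \<Rightarrow> real \<Rightarrow> real \<Rightarrow> real \<Rightarrow> real \<Rightarrow> real \<Rightarrow> real \<Rightarrow> bool" where
  "conic_conditions lam \<theta> m a b c d \<longleftrightarrow>
    (let n = m * tan \<theta>; X = (lam, 0::real); Y = (0::real, 0::real); Z = (m, n) in
      conic a b c d X = 0 \<and> conic a b c d Y = 0 \<and> conic a b c d Z = 0 \<and>
      (\<exists>t>0. Y - X = t *\<^sub>R (- conic_grad a b c d X)) \<and>
      (\<exists>t>0. Z - Y = t *\<^sub>R (- conic_grad a b c d Y)))"

definition admissible :: "real \<Rightarrow> real \<Rightarrow> real \<Rightarrow> real \<Rightarrow> real \<Rightarrow> real \<Rightarrow> real \<Rightarrow> bool" where
  "admissible lam \<theta> m a b c d \<longleftrightarrow>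
     conic_conditions lam \<theta> m a b c d \<and> is_ellipse {p. conic a b c d p = 0}"

end

theory Submission
  imports Defs
begin

text \<open>Only (P1) at X and (P2) are needed.
  Since \<phi>(X) = 0 with X on the first axis, c = -\<lambda>/2. By (P2) at X the gradient there is
  horizontal, so b\<lambda> + d = 0; by (P2) at Y the gradient (c, d) at the origin is parallel to
  Z = (m, m tan \<theta>), so d = c tan \<theta>. Together b = tan \<theta> / 2, and the first component of
  \<nabla>\<phi>(u, v) = 0, namely u + b v + c = 0, is the claimed line.\<close>

lemma conic_on_first_axis: "conic a b c d (x, 0) = x * (x / 2 + c)"
  by (simp add: conic_def power2_eq_square algebra_simps)

lemma conic_first_axis_root:
  assumes "conic a b c d (x, 0) = 0" and "x \<noteq> 0"
  shows "c = - x / 2"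
  using assms by (simp add: conic_on_first_axis)

lemma conic_grad_horizontal:
  assumes "(y, 0) = t *\<^sub>R (- conic_grad a b c d (x, 0))" and "t \<noteq> 0"
  shows "d = - b * x"
proof -
  have "t * (b * x + d) = 0"
    using assms(1) by (simp add: conic_grad_def algebra_simps)
  then show ?thesis
    using assms(2) by (simp add: add_eq_0_iff2)
qed

lemma conic_grad_origin_parallel:
  assumes "(x, y) = t *\<^sub>R (- conic_grad a b c d (0, 0))"
  shows "d * x = c * y"
  using assms by (simp add: conic_grad_def)

lemma conic_grad_zero_first_component:
  assumes "conic_grad a b c d (u, v) = (0, 0)"
  shows "u = - c - b * v"
  using assms by (simp add: conic_grad_def)

lemma conic_conditions_coefficients:
  assumes "conic_conditions lam \<theta> m a b c d" and "lam \<noteq> 0" and "m \<noteq> 0"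
  shows "c = - lam / 2" and "b = tan \<theta> / 2"
proof -
  have root: "conic a b c d (lam, 0) = 0"
    and "\<exists>t>0. (0, 0) - (lam, 0) = t *\<^sub>R (- conic_grad a b c d (lam, 0))"
    and "\<exists>t>0. (m, m * tan \<theta>) - (0, 0) = t *\<^sub>R (- conic_grad a b c d (0, 0))"
    using assms(1) unfolding conic_conditions_def Let_def by auto
  then obtain t s where
    at_X: "t > 0" "(- lam, 0) = t *\<^sub>R (- conic_grad a b c d (lam, 0))" and
    at_Y: "(m, m * tan \<theta>) = s *\<^sub>R (- conic_grad a b c d (0, 0))"
    by auto
  show c: "c = - lam / 2"
    using conic_first_axis_root[OF root assms(2)] .
  have "d = - b * lam"
    using conic_grad_horizontal at_X by simp
  moreover have "d * m = c * (m * tan \<theta>)"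
    using conic_grad_origin_parallel[OF at_Y] .
  ultimately show "b = tan \<theta> / 2"
    using c assms(2,3) by (simp add: field_simps)
qed

theorem proposition4:
  fixes lam \<theta> :: real
  assumes "lam > 0" and "0 < \<theta>" and "\<theta> < pi / 2"
  shows "{(u, v). \<exists>m a b c d. m > 0 \<and> admissible lam \<theta> m a b c d \<and>
                  conic_grad a b c d (u, v) = (0, 0)}
         \<subseteq> {(u, v). u = lam / 2 - tan \<theta> / 2 * v}"
proof clarify
  fix u v m a b c d
  assume "m > 0" and "admissible lam \<theta> m a b c d"
    and center: "conic_grad a b c d (u, v) = (0, 0)"
  then have "c = - lam / 2" and "b = tan \<theta> / 2"
    using conic_conditions_coefficients \<open>lam > 0\<close> unfolding admissible_def by auto
  then show "u = lam / 2 - tan \<theta> / 2 * v"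
    using conic_grad_zero_first_component[OF center] by simp
qed

end
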